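(* Let $K$ be a field of characteristic zero, $S=K[X_0,X_1,Y_0,Y_1]$ bigraded by $\deg X_i=(1,0)$, $\deg Y_i=(0,1)$. Let $\mathbb{Y}=\sum_{(i,j)\in D_{\mathbb{X}}} m_{ij}P_{ij}$ be a fat point scheme in $\mathbb{P}^1\times\mathbb{P}^1$ and let $\mathbb{V}=\sum_{(i,j)\in D_{\mathbb{X}}}(m_{ij}+1)P_{ij}$ be its thickening. Then the sequence of bigraded $R_{\mathbb{Y}}$-modules $$0\longrightarrow I_{\mathbb{Y}}/I_{\mathbb{V}}\longrightarrow R_{\mathbb{Y}}^2(-1,0)\oplus R_{\mathbb{Y}}^2(0,-1)\longrightarrow \Omega^1_{R_{\mathbb{Y}}/K}\longrightarrow 0$$ is exact, where the first map sends $F+I_{\mathbb{V}}$ ($F\in I_{\mathbb{Y}}$) to the class of $dF=\sum_{i}\frac{\partial F}{\partial X_i}dX_i+\sum_i\frac{\partial F}{\partial Y_i}dY_i$ in $\Omega^1_{S/K}/I_{\mathbb{Y}}\Omega^1_{S/K}\cong R_{\mathbb{Y}}^2(-1,0)\oplus R_{\mathbb{Y}}^2(0,-1)$ (basis $dX_0,dX_1,dY_0,dY_1$), and the second map sends $dX_0,dX_1,dY_0,dY_1$ to $dx_0,dx_1,dy_0,dy_1$.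
   Context: Points of $\mathbb{P}^1\times\mathbb{P}^1$ are $K$-rational. For a finite set $\mathbb{X}$ of distinct points, $\pi_1(\mathbb{X})=\{Q_1,\dots,Q_r\}$, $\pi_2(\mathbb{X})=\{R_1,\dots,R_t\}$, $P_{ij}=Q_i\times R_j$, $D_{\mathbb{X}}=\{(i,j)\mid P_{ij}\in\mathbb{X}\}$, $\wp_{ij}$ the (bihomogeneous prime) vanishing ideal of $P_{ij}$. For positive integers $m_{ij}$ the fat point scheme $\mathbb{Y}=\sum m_{ij}P_{ij}$ has ideal $I_{\mathbb{Y}}=\bigcap\wp_{ij}^{m_{ij}}$ and bihomogeneous coordinate ring $R_{\mathbb{Y}}=S/I_{\mathbb{Y}}$; $x_i,y_i$ denote the images of $X_i,Y_i$. $\Omega^1_{R_{\mathbb{Y}}/K}=J/J^2$ where $J$ is the kernel of multiplication $R_{\mathbb{Y}}\otimes_K R_{\mathbb{Y}}\to R_{\mathbb{Y}}$, bigraded with $\deg dx_i=(1,0)$, $\deg dy_i=(0,1)$. For a bigraded module $M$, $M(a,b)_{i,j}=M_{a+i,b+j}$. *)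

theory Defs
  imports Main "HOL-Library.Poly_Mapping"
begin

text \<open>Variables
  0,1,2,3 stand for X0,X1,Y0,Y1; variables 4,5,6,7 are a second copy X0',X1',Y0',Y1'
  used to present the tensor product R_Y (x)_K R_Y.\<close>

type_synonym 'k mpoly = "(nat \<Rightarrow>\<^sub>0 nat) \<Rightarrow>\<^sub>0 'k"

definition Var :: "nat \<Rightarrow> 'k::comm_ring_1 mpoly" where
  "Var i = Poly_Mapping.single (Poly_Mapping.single i 1) 1"

definition Cst :: "'k::comm_ring_1 \<Rightarrow> 'k mpoly" where
  "Cst c = Poly_Mapping.single 0 c"

definition polys_in :: "nat \<Rightarrow> 'k::comm_ring_1 mpoly set" where
  "polys_in n = {f :: 'k mpoly. \<forall>t\<in>Poly_Mapping.keys f. \<forall>i\<in>Poly_Mapping.keys t. i < n}"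

text \<open>S = K[X0,X1,Y0,Y1] and the ring K[X,Y,X',Y'] = S (x)_K S\<close>
abbreviation S4 :: "'k::comm_ring_1 mpoly set" where "S4 \<equiv> polys_in 4"
abbreviation S8 :: "'k::comm_ring_1 mpoly set" where "S8 \<equiv> polys_in 8"

inductive_set ideal_gen :: "'a::comm_ring_1 set \<Rightarrow> 'a set \<Rightarrow> 'a set" for R A where
  zero: "0 \<in> ideal_gen R A"
| step: "r \<in> R \<Longrightarrow> a \<in> A \<Longrightarrow> x \<in> ideal_gen R A \<Longrightarrow> r * a + x \<in> ideal_gen R A"

definition ideal_mult :: "'a::comm_ring_1 set \<Rightarrow> 'a set \<Rightarrow> 'a set \<Rightarrow> 'a set" where
  "ideal_mult R I J = ideal_gen R {a * b | a b. a \<in> I \<and> b \<in> J}"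

fun ideal_pow :: "'a::comm_ring_1 set \<Rightarrow> 'a set \<Rightarrow> nat \<Rightarrow> 'a set" where
  "ideal_pow R I 0 = ideal_gen R {1}"
| "ideal_pow R I (Suc n) = ideal_mult R (ideal_pow R I n) I"

definition pderiv_var :: "nat \<Rightarrow> 'k::comm_ring_1 mpoly \<Rightarrow> 'k mpoly" where
  "pderiv_var i f = (\<Sum>t\<in>Poly_Mapping.keys f.
     Poly_Mapping.single (t - Poly_Mapping.single i 1) (of_nat (Poly_Mapping.lookup t i) * Poly_Mapping.lookup f t))"

text \<open>a point of P^1 x P^1 with K-rational coordinates ([a0:a1],[b0:b1])\<close>
type_synonym 'k pt = "('k \<times> 'k) \<times> ('k \<times> 'k)"

definition valid_pt :: "'k::field pt \<Rightarrow> bool" where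
  "valid_pt P = (case P of ((a0,a1),(b0,b1)) \<Rightarrow> (a0,a1) \<noteq> (0,0) \<and> (b0,b1) \<noteq> (0,0))"

definition proj_eq :: "('k::field \<times> 'k) \<Rightarrow> ('k \<times> 'k) \<Rightarrow> bool" where
  "proj_eq u v = (fst u * snd v = snd u * fst v)"

definition same_pt :: "'k::field pt \<Rightarrow> 'k pt \<Rightarrow> bool" where
  "same_pt P P' = (proj_eq (fst P) (fst P') \<and> proj_eq (snd P) (snd P'))"

definition pt_ideal :: "'k::field pt \<Rightarrow> 'k mpoly set" where
  "pt_ideal P = (case P of ((a0,a1),(b0,b1)) \<Rightarrow>
     ideal_gen S4 {Cst a1 * Var 0 - Cst a0 * Var 1, Cst b1 * Var 2 - Cst b0 * Var 3})"

definition fat_ideal :: "'k::field pt set \<Rightarrow> ('k pt \<Rightarrow> nat) \<Rightarrow> 'k mpoly set" where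
  "fat_ideal X m = S4 \<inter> (\<Inter>P\<in>X. ideal_pow S4 (pt_ideal P) (m P))"

definition shift_mon :: "(nat \<Rightarrow>\<^sub>0 nat) \<Rightarrow> (nat \<Rightarrow>\<^sub>0 nat)" where
  "shift_mon t = (\<Sum>i\<in>Poly_Mapping.keys t. Poly_Mapping.single (i + 4) (Poly_Mapping.lookup t i))"

definition prime_copy :: "'k::comm_ring_1 mpoly \<Rightarrow> 'k mpoly" where
  "prime_copy f = (\<Sum>t\<in>Poly_Mapping.keys f. Poly_Mapping.single (shift_mon t) (Poly_Mapping.lookup f t))"

text \<open>multiplication map S (x) S \<rightarrow> S: X_i' \<mapsto> X_i (variable i \<mapsto> i mod 4)\<close>
definition collapse_mon :: "(nat \<Rightarrow>\<^sub>0 nat) \<Rightarrow> (nat \<Rightarrow>\<^sub>0 nat)" where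
  "collapse_mon t = (\<Sum>i\<in>Poly_Mapping.keys t. Poly_Mapping.single (i mod 4) (Poly_Mapping.lookup t i))"

definition collapse :: "'k::comm_ring_1 mpoly \<Rightarrow> 'k mpoly" where
  "collapse f = (\<Sum>t\<in>Poly_Mapping.keys f. Poly_Mapping.single (collapse_mon t) (Poly_Mapping.lookup f t))"

text \<open>R_Y (x)_K R_Y = S8 / TQ I where TQ I = I (x) S + S (x) I\<close>
definition TQ :: "'k::comm_ring_1 mpoly set \<Rightarrow> 'k mpoly set" where
  "TQ I = ideal_gen S8 (I \<union> prime_copy ` I)"

text \<open>preimage in S8 of J = ker(R_Y (x) R_Y \<rightarrow> R_Y)\<close>
definition Jt :: "'k::comm_ring_1 mpoly set \<Rightarrow> 'k mpoly set" where
  "Jt I = {f \<in> S8. collapse f \<in> I}"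

text \<open>preimage in S8 of J^2; so Omega^1_{R_Y/K} = J/J^2 = Jt I / Nt I\<close>
definition Nt :: "'k::comm_ring_1 mpoly set \<Rightarrow> 'k mpoly set" where
  "Nt I = ideal_gen S8 (ideal_mult S8 (Jt I) (Jt I) \<union> TQ I)"

text \<open>representative of the image of (g0,g1,g2,g3) in R_Y^4 under
  dX_i \<mapsto> dx_i = 1 (x) x_i - x_i (x) 1, R_Y acting on the first factor\<close>
definition omega_map :: "(nat \<Rightarrow> 'k::comm_ring_1 mpoly) \<Rightarrow> 'k mpoly" where
  "omega_map g = (\<Sum>i<4. g i * (Var (i + 4) - Var i))"

end

theory Submission
  imports Defs "HOL.Modules"
begin

text \<open>
  Exactness at I_Y/I_V is checked one point at a time.  Let the point ideal be generated by the
  linear forms u and v.  Constant-coefficient combinations Lx, Ly of the partial derivatives with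
  Lx u = Ly v = 1 and Lx v = Ly u = 0 make D = u Lx + v Ly a derivation fixing u and v, so D acts
  on the m-th power of the point ideal modulo the (m+1)-st as multiplication by m.  If F and all
  its partial derivatives vanish to order m, then D F vanishes to order m+1, hence so does m F,
  and in characteristic zero so does F.  Well-definedness is the fact that a derivative lowers the
  order of vanishing by at most one.

  For Omega = J/J^2 the key identity is Taylor's formula F' - F = sum_i (dF/dX_i) (X_i' - X_i)
  modulo J^2, proved by induction over polynomials: it shows that the dx_i generate Omega and that
  dF vanishes in Omega for F in I_Y.  Conversely, restricting the primed gradient to the diagonal
  kills J^2 and I_Y (x) S + S (x) I_Y modulo I_Y and gradients of elements of I_Y, and it sends
  sum_i g_i (X_i' - X_i) back to g.
\<close>

section \<open>Polynomial rings and derivations\<close>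

lemma poly_mapping_single_add_induct [case_names zero single_add]:
  fixes f :: "'a \<Rightarrow>\<^sub>0 'b::monoid_add"
  assumes "P 0"
    and "\<And>a b f. a \<notin> Poly_Mapping.keys f \<Longrightarrow> b \<noteq> 0 \<Longrightarrow> P f \<Longrightarrow> P (Poly_Mapping.single a b + f)"
  shows "P f"
proof -
  have "Poly_Mapping.update a b g = Poly_Mapping.single a b + g"
    if "a \<notin> Poly_Mapping.keys g" for a b and g :: "'a \<Rightarrow>\<^sub>0 'b"
    using that by (intro poly_mapping_eqI)
      (auto simp: lookup_update lookup_add lookup_single when_def in_keys_iff)
  with assms show ?thesis
    by (induction f rule: update_induct) simp_all
qed

lemma keys_single_add:
  "a \<notin> Poly_Mapping.keys f \<Longrightarrow> b \<noteq> 0 \<Longrightarrow>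
   Poly_Mapping.keys (Poly_Mapping.single a b + f) = insert a (Poly_Mapping.keys f)"
  by (auto simp: in_keys_iff lookup_add lookup_single when_def split: if_splits)

locale derivation = additive D for D :: "'a::comm_ring_1 \<Rightarrow> 'a" +
  assumes leibniz: "D (f * g) = D f * g + f * D g"

lemma mult_hom_of_monomials:
  fixes \<Phi> :: "('a::comm_monoid_add \<Rightarrow>\<^sub>0 'b::comm_ring_1) \<Rightarrow> 'c::comm_ring_1"
  assumes "additive \<Phi>"
    and monomial: "\<And>s a t b. \<Phi> (Poly_Mapping.single s a * Poly_Mapping.single t b) =
      \<Phi> (Poly_Mapping.single s a) * \<Phi> (Poly_Mapping.single t b)"
  shows "\<Phi> (f * g) = \<Phi> f * \<Phi> g"
proof -
  interpret additive \<Phi> by fact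
  have "\<Phi> (Poly_Mapping.single s a * g) = \<Phi> (Poly_Mapping.single s a) * \<Phi> g" for s a
    by (induction g rule: poly_mapping_single_add_induct) (simp_all add: zero add distrib_left monomial)
  then show ?thesis
    by (induction f rule: poly_mapping_single_add_induct) (simp_all add: zero add distrib_right)
qed

lemma derivation_of_monomials:
  fixes D :: "('a::comm_monoid_add \<Rightarrow>\<^sub>0 'b::comm_ring_1) \<Rightarrow> ('a \<Rightarrow>\<^sub>0 'b)"
  assumes "additive D"
    and monomial: "\<And>s a t b. D (Poly_Mapping.single s a * Poly_Mapping.single t b) =
      D (Poly_Mapping.single s a) * Poly_Mapping.single t b + Poly_Mapping.single s a * D (Poly_Mapping.single t b)"
  shows "derivation D"
proof
  interpret additive D by fact
  show "D (f + g) = D f + D g" for f g by (rule add)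
  have single_mult: "D (Poly_Mapping.single s a * g) =
      D (Poly_Mapping.single s a) * g + Poly_Mapping.single s a * D g" for s a g
  proof (induction g rule: poly_mapping_single_add_induct)
    case (single_add t b g)
    have "D (Poly_Mapping.single s a * (Poly_Mapping.single t b + g)) =
        D (Poly_Mapping.single s a * Poly_Mapping.single t b) + D (Poly_Mapping.single s a * g)"
      by (simp add: distrib_left add)
    also have "\<dots> = D (Poly_Mapping.single s a) * (Poly_Mapping.single t b + g) +
        Poly_Mapping.single s a * D (Poly_Mapping.single t b + g)"
      unfolding monomial single_add.IH add by (simp add: algebra_simps)
    finally show ?case .
  qed (simp add: zero)
  show "D (f * g) = D f * g + f * D g" for f g
  proof (induction f rule: poly_mapping_single_add_induct)
    case (single_add t b f)
    have "D ((Poly_Mapping.single t b + f) * g) = D (Poly_Mapping.single t b * g) + D (f * g)"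
      by (simp add: distrib_right add)
    also have "\<dots> = D (Poly_Mapping.single t b + f) * g + (Poly_Mapping.single t b + f) * D g"
      unfolding single_mult single_add.IH add by (simp add: algebra_simps)
    finally show ?case .
  qed (simp add: zero)
qed

lemma pderiv_var_single:
  "pderiv_var i (Poly_Mapping.single t c) =
   Poly_Mapping.single (t - Poly_Mapping.single i 1) (of_nat (Poly_Mapping.lookup t i) * c)"
  by (simp add: pderiv_var_def)

lemma additive_pderiv_var: "additive (pderiv_var i)"
  by unfold_locales
    (unfold pderiv_var_def, rule setsum_keys_plus_distrib, simp_all add: distrib_left single_add)

lemma pderiv_var_single_mult_single:
  "pderiv_var i (Poly_Mapping.single s a * Poly_Mapping.single t b) =
   pderiv_var i (Poly_Mapping.single s a) * Poly_Mapping.single t b +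
   Poly_Mapping.single s a * pderiv_var i (Poly_Mapping.single t b)"
proof -
  have shift: "u + w - Poly_Mapping.single i 1 = (u - Poly_Mapping.single i 1) + w"
    if "Poly_Mapping.lookup u i \<noteq> 0" for u w :: "nat \<Rightarrow>\<^sub>0 nat"
    using that by (intro poly_mapping_eqI) (auto simp: lookup_add lookup_minus lookup_single when_def)
  have left: "Poly_Mapping.single (s + t - Poly_Mapping.single i 1) (of_nat (Poly_Mapping.lookup s i) * (a * b)) =
      pderiv_var i (Poly_Mapping.single s a) * Poly_Mapping.single t b"
  proof (cases "Poly_Mapping.lookup s i = 0")
    case False
    then show ?thesis
      unfolding shift[OF False] by (simp add: pderiv_var_single mult_single mult.assoc)
  qed (simp add: pderiv_var_single)
  have right: "Poly_Mapping.single (s + t - Poly_Mapping.single i 1) (of_nat (Poly_Mapping.lookup t i) * (a * b)) =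
      Poly_Mapping.single s a * pderiv_var i (Poly_Mapping.single t b)"
  proof (cases "Poly_Mapping.lookup t i = 0")
    case False
    then show ?thesis
      unfolding add.commute[of s] shift[OF False] by (simp add: pderiv_var_single mult_single algebra_simps)
  qed (simp add: pderiv_var_single)
  have "pderiv_var i (Poly_Mapping.single s a * Poly_Mapping.single t b) =
      Poly_Mapping.single (s + t - Poly_Mapping.single i 1) (of_nat (Poly_Mapping.lookup s i) * (a * b)) +
      Poly_Mapping.single (s + t - Poly_Mapping.single i 1) (of_nat (Poly_Mapping.lookup t i) * (a * b))"
    by (simp add: mult_single pderiv_var_single lookup_add distrib_right flip: single_add)
  then show ?thesis
    unfolding left right .
qed

interpretation pderiv_var: derivation "pderiv_var i" for i
  by (rule derivation_of_monomials[OF additive_pderiv_var pderiv_var_single_mult_single])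

lemma pderiv_var_Var: "pderiv_var i (Var j) = (if i = j then 1 else 0)"
  by (simp add: Var_def pderiv_var_single lookup_single)

lemma pderiv_var_Cst [simp]: "pderiv_var i (Cst c) = 0"
  by (simp add: Cst_def pderiv_var_single)

lemma Cst_mult: "Cst (a * b) = Cst a * Cst b"
  by (simp add: Cst_def mult_single)

lemma Cst_diff: "Cst (a - b) = Cst a - Cst b"
  by (simp add: Cst_def single_diff)

lemma Cst_of_nat: "Cst (of_nat n) = of_nat n"
  by (simp add: Cst_def)

lemma Cst_0 [simp]: "Cst 0 = 0" and Cst_1 [simp]: "Cst 1 = 1"
  using Cst_of_nat[of 0] Cst_of_nat[of 1] by simp_all

lemma collapse_single: "collapse (Poly_Mapping.single t c) = Poly_Mapping.single (collapse_mon t) c"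
  and prime_copy_single: "prime_copy (Poly_Mapping.single t c) = Poly_Mapping.single (shift_mon t) c"
  by (simp_all add: collapse_def prime_copy_def)

lemma collapse_mon_add: "collapse_mon (s + t) = collapse_mon s + collapse_mon t"
  and shift_mon_add: "shift_mon (s + t) = shift_mon s + shift_mon t"
  unfolding collapse_mon_def shift_mon_def
  by (rule setsum_keys_plus_distrib; simp add: single_add)+

interpretation collapse: additive collapse
  by unfold_locales (unfold collapse_def, rule setsum_keys_plus_distrib, simp_all add: single_add)

interpretation prime_copy: additive prime_copy
  by unfold_locales (unfold prime_copy_def, rule setsum_keys_plus_distrib, simp_all add: single_add)

lemma collapse_mult: "collapse (f * g) = collapse f * collapse g"
  by (rule mult_hom_of_monomials)
    (simp_all add: collapse.additive_axioms mult_single collapse_single collapse_mon_add)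

lemma prime_copy_mult: "prime_copy (f * g) = prime_copy f * prime_copy g"
  by (rule mult_hom_of_monomials)
    (simp_all add: prime_copy.additive_axioms mult_single prime_copy_single shift_mon_add)

lemma collapse_Var: "collapse (Var j) = Var (j mod 4)"
  by (simp add: Var_def collapse_single collapse_mon_def)

lemma collapse_Cst [simp]: "collapse (Cst c) = Cst c"
  by (simp add: Cst_def collapse_single collapse_mon_def)

lemma collapse_0 [simp]: "collapse 0 = 0" and collapse_1 [simp]: "collapse 1 = 1"
  using collapse.zero collapse_Cst[of 1] by simp_all

lemma prime_copy_Var: "prime_copy (Var j) = Var (j + 4)"
  by (simp add: Var_def prime_copy_single shift_mon_def)

lemma prime_copy_Cst [simp]: "prime_copy (Cst c) = Cst c"
  by (simp add: Cst_def prime_copy_single shift_mon_def)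

lemma polys_in_iff: "f \<in> polys_in n \<longleftrightarrow> (\<forall>t\<in>Poly_Mapping.keys f. \<forall>i\<in>Poly_Mapping.keys t. i < n)"
  by (simp add: polys_in_def)

lemma polys_in_add: "f \<in> polys_in n \<Longrightarrow> g \<in> polys_in n \<Longrightarrow> f + g \<in> polys_in n"
  unfolding polys_in_iff using keys_add[of f g] by blast

lemma polys_in_uminus: "f \<in> polys_in n \<Longrightarrow> - f \<in> polys_in n"
  unfolding polys_in_iff by simp

lemma polys_in_diff: "f \<in> polys_in n \<Longrightarrow> g \<in> polys_in n \<Longrightarrow> f - g \<in> polys_in n"
  using polys_in_add[of f n "- g"] polys_in_uminus[of g n] by simp

lemma polys_in_mult: "f \<in> polys_in n \<Longrightarrow> g \<in> polys_in n \<Longrightarrow> f * g \<in> polys_in n"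
  unfolding polys_in_iff
proof (intro ballI)
  fix t i
  assume f: "\<forall>t\<in>Poly_Mapping.keys f. \<forall>i\<in>Poly_Mapping.keys t. i < n"
    and g: "\<forall>t\<in>Poly_Mapping.keys g. \<forall>i\<in>Poly_Mapping.keys t. i < n"
    and "t \<in> Poly_Mapping.keys (f * g)" and i: "i \<in> Poly_Mapping.keys t"
  then obtain a b where "t = a + b" "a \<in> Poly_Mapping.keys f" "b \<in> Poly_Mapping.keys g"
    using keys_mult[of f g] by blast
  with i keys_add[of a b] f g show "i < n" by blast
qed

lemma polys_in_Var: "i < n \<Longrightarrow> Var i \<in> polys_in n"
  by (simp add: polys_in_iff Var_def)

lemma polys_in_Cst: "Cst c \<in> polys_in n"
  by (simp add: polys_in_iff Cst_def)

lemma polys_in_0 [simp]: "0 \<in> polys_in n" and polys_in_1 [simp]: "1 \<in> polys_in n"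
  using polys_in_Cst[of 0] polys_in_Cst[of 1] by simp_all

lemma polys_in_mono: "f \<in> polys_in n \<Longrightarrow> n \<le> m \<Longrightarrow> f \<in> polys_in m"
  unfolding polys_in_iff by force

lemma S4_subset_S8: "S4 \<subseteq> S8"
  by (auto intro: polys_in_mono)

lemma polys_in_sum: "(\<And>x. x \<in> A \<Longrightarrow> h x \<in> polys_in n) \<Longrightarrow> sum h A \<in> polys_in n"
  by (induction A rule: infinite_finite_induct) (simp_all add: polys_in_add)

lemma polys_in_power: "f \<in> polys_in n \<Longrightarrow> f ^ k \<in> polys_in n"
  by (induction k) (simp_all add: polys_in_mult)

lemma Var_power_eq_single: "Var i ^ k = Poly_Mapping.single (Poly_Mapping.single i k) 1"
  by (induction k) (simp_all add: Var_def mult_single add.commute flip: Poly_Mapping.single_add)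

lemma polys_in_induct [consumes 1, case_names Cst Var add mult]:
  fixes f :: "'k::comm_ring_1 mpoly"
  assumes f: "f \<in> polys_in n"
    and Cst: "\<And>c. P (Cst c)"
    and Var: "\<And>i. i < n \<Longrightarrow> P (Var i)"
    and add: "\<And>f g. f \<in> polys_in n \<Longrightarrow> g \<in> polys_in n \<Longrightarrow> P f \<Longrightarrow> P g \<Longrightarrow> P (f + g)"
    and mult: "\<And>f g. f \<in> polys_in n \<Longrightarrow> g \<in> polys_in n \<Longrightarrow> P f \<Longrightarrow> P g \<Longrightarrow> P (f * g)"
  shows "P f"
proof -
  have Var_power: "P (Var i ^ k)" if "i < n" for i k
  proof (induction k)
    case 0
    show ?case using Cst[of 1] by simp
  next
    case (Suc k)
    show ?case
      using mult[OF polys_in_Var[OF that] polys_in_power[OF polys_in_Var[OF that]] Var[OF that] Suc]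
      by simp
  qed
  have monomial: "Poly_Mapping.single t c \<in> polys_in n \<and> P (Poly_Mapping.single t c)"
    if "\<forall>i\<in>Poly_Mapping.keys t. i < n" for t c
    using that
  proof (induction t arbitrary: c rule: poly_mapping_single_add_induct)
    case zero
    show ?case using Cst polys_in_Cst by (simp add: Cst_def)
  next
    case (single_add i k t)
    then have i: "i < n" and t: "\<forall>j\<in>Poly_Mapping.keys t. j < n"
      by (simp_all add: keys_single_add)
    have split: "Poly_Mapping.single (Poly_Mapping.single i k + t) c = Var i ^ k * Poly_Mapping.single t c"
      by (simp add: Var_power_eq_single mult_single)
    have t_mem: "Poly_Mapping.single t c \<in> polys_in n" and P_t: "P (Poly_Mapping.single t c)"
      using single_add.IH[OF t] by simp_all
    have Var_power_mem: "Var i ^ k \<in> polys_in n"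
      by (rule polys_in_power[OF polys_in_Var[OF i]])
    show ?case
      unfolding split
      using polys_in_mult[OF Var_power_mem t_mem] mult[OF Var_power_mem t_mem Var_power[OF i] P_t] ..
  qed
  show ?thesis using f
  proof (induction f rule: poly_mapping_single_add_induct)
    case zero
    then show ?case using Cst[of 0] by simp
  next
    case (single_add t c f)
    then have "f \<in> polys_in n" and "\<forall>i\<in>Poly_Mapping.keys t. i < n"
      by (auto simp: polys_in_iff keys_single_add)
    then show ?case using single_add.IH monomial add polys_in_add by metis
  qed
qed

lemma pderiv_var_polys_in: "f \<in> polys_in n \<Longrightarrow> pderiv_var k f \<in> polys_in n"
  by (induction f rule: polys_in_induct)
    (auto simp: pderiv_var_Var pderiv_var.add pderiv_var.leibniz intro: polys_in_add polys_in_mult)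

lemma pderiv_var_eq_0_if_polys_in: "f \<in> polys_in n \<Longrightarrow> n \<le> k \<Longrightarrow> pderiv_var k f = 0"
  by (induction f rule: polys_in_induct) (auto simp: pderiv_var_Var pderiv_var.add pderiv_var.leibniz)

lemma collapse_mem_S4: "f \<in> polys_in n \<Longrightarrow> collapse f \<in> S4"
  by (induction f rule: polys_in_induct)
    (auto simp: collapse_Var collapse.add collapse_mult polys_in_Var polys_in_Cst
      intro: polys_in_add polys_in_mult)

lemma collapse_S4: "f \<in> S4 \<Longrightarrow> collapse f = f"
  by (induction f rule: polys_in_induct) (auto simp: collapse_Var collapse.add collapse_mult)

lemma prime_copy_mem_S8: "f \<in> S4 \<Longrightarrow> prime_copy f \<in> S8"
  by (induction f rule: polys_in_induct)
    (auto simp: prime_copy_Var prime_copy.add prime_copy_mult polys_in_Var polys_in_Cst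
      intro: polys_in_add polys_in_mult)

lemma collapse_prime_copy: "f \<in> S4 \<Longrightarrow> collapse (prime_copy f) = f"
  by (induction f rule: polys_in_induct)
    (auto simp: prime_copy_Var collapse_Var collapse.add collapse_mult prime_copy.add prime_copy_mult)

lemma collapse_pderiv_var_prime_copy:
  "f \<in> S4 \<Longrightarrow> collapse (pderiv_var (i + 4) (prime_copy f)) = pderiv_var i f"
  by (induction f rule: polys_in_induct)
    (simp_all add: prime_copy_Var pderiv_var_Var prime_copy.add prime_copy_mult pderiv_var.add
      pderiv_var.leibniz collapse.add collapse_mult collapse_prime_copy)

section \<open>Ideals of a subring and their powers\<close>

declare ideal_pow.simps [simp del]

definition is_ideal :: "'a::comm_ring_1 set \<Rightarrow> 'a set \<Rightarrow> bool" where
  "is_ideal R J \<longleftrightarrow> J \<subseteq> R \<and> 0 \<in> J \<and> (\<forall>x\<in>J. \<forall>y\<in>J. x + y \<in> J) \<and> (\<forall>r\<in>R. \<forall>x\<in>J. r * x \<in> J)"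

lemma is_ideal_subset: "is_ideal R J \<Longrightarrow> x \<in> J \<Longrightarrow> x \<in> R"
  and is_ideal_0: "is_ideal R J \<Longrightarrow> 0 \<in> J"
  and is_ideal_add: "is_ideal R J \<Longrightarrow> x \<in> J \<Longrightarrow> y \<in> J \<Longrightarrow> x + y \<in> J"
  and is_ideal_mult: "is_ideal R J \<Longrightarrow> r \<in> R \<Longrightarrow> x \<in> J \<Longrightarrow> r * x \<in> J"
  by (auto simp: is_ideal_def)

lemma is_ideal_mult_right: "is_ideal R J \<Longrightarrow> r \<in> R \<Longrightarrow> x \<in> J \<Longrightarrow> x * r \<in> J"
  using is_ideal_mult[of R J r x] by (simp add: mult.commute)

lemma is_ideal_sum: "is_ideal R J \<Longrightarrow> (\<And>x. x \<in> A \<Longrightarrow> h x \<in> J) \<Longrightarrow> sum h A \<in> J"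
  by (induction A rule: infinite_finite_induct) (auto intro: is_ideal_0 is_ideal_add)

locale subring =
  fixes R :: "'a::comm_ring_1 set"
  assumes zero_mem: "0 \<in> R" and one_mem: "1 \<in> R"
    and add_mem: "x \<in> R \<Longrightarrow> y \<in> R \<Longrightarrow> x + y \<in> R"
    and mult_mem: "x \<in> R \<Longrightarrow> y \<in> R \<Longrightarrow> x * y \<in> R"
    and uminus_mem: "x \<in> R \<Longrightarrow> - x \<in> R"
begin

lemma is_ideal_uminus: "is_ideal R J \<Longrightarrow> x \<in> J \<Longrightarrow> - x \<in> J"
  using is_ideal_mult[of R J "- 1" x] uminus_mem[OF one_mem] by simp

lemma is_ideal_diff: "is_ideal R J \<Longrightarrow> x \<in> J \<Longrightarrow> y \<in> J \<Longrightarrow> x - y \<in> J"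
  using is_ideal_add[of R J x "- y"] is_ideal_uminus[of J y] by simp

lemma is_ideal_Inter: "(\<And>P. P \<in> X \<Longrightarrow> is_ideal R (J P)) \<Longrightarrow> is_ideal R (R \<inter> (\<Inter>P\<in>X. J P))"
  unfolding is_ideal_def using zero_mem add_mem mult_mem by auto

lemma ideal_gen_add: "x \<in> ideal_gen R A \<Longrightarrow> y \<in> ideal_gen R A \<Longrightarrow> x + y \<in> ideal_gen R A"
  by (induction x rule: ideal_gen.induct) (simp, metis add.assoc ideal_gen.step)

lemma ideal_gen_mult:
  assumes "r \<in> R"
  shows "x \<in> ideal_gen R A \<Longrightarrow> r * x \<in> ideal_gen R A"
proof (induction x rule: ideal_gen.induct)
  case zero
  show ?case by (simp add: ideal_gen.zero)
next
  case (step s a x)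
  then have "(r * s) * a + r * x \<in> ideal_gen R A"
    by (intro ideal_gen.step mult_mem assms) simp_all
  then show ?case by (simp add: algebra_simps)
qed

lemma ideal_gen_base: "a \<in> A \<Longrightarrow> a \<in> ideal_gen R A"
  using ideal_gen.step[OF one_mem _ ideal_gen.zero, of a A] by simp

lemma ideal_gen_minimal:
  assumes "is_ideal R J" "A \<subseteq> J"
  shows "ideal_gen R A \<subseteq> J"
proof
  show "x \<in> J" if "x \<in> ideal_gen R A" for x
    using that by (induction x rule: ideal_gen.induct) (use assms in \<open>auto simp: is_ideal_def\<close>)
qed

lemma ideal_gen_is_ideal: "A \<subseteq> R \<Longrightarrow> is_ideal R (ideal_gen R A)"
proof -
  assume "A \<subseteq> R"
  then have "ideal_gen R A \<subseteq> R"
    by (intro ideal_gen_minimal) (auto simp: is_ideal_def zero_mem add_mem mult_mem)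
  then show ?thesis
    by (auto simp: is_ideal_def intro: ideal_gen.zero ideal_gen_add ideal_gen_mult)
qed

lemma ideal_gen_subset: "A \<subseteq> R \<Longrightarrow> ideal_gen R A \<subseteq> R"
  using ideal_gen_is_ideal is_ideal_subset by blast

lemma ideal_pow_0 [simp]: "ideal_pow R I 0 = R"
proof
  show "ideal_pow R I 0 \<subseteq> R"
    using ideal_gen_minimal[of R "{1}"] one_mem
    by (simp add: ideal_pow.simps is_ideal_def zero_mem add_mem mult_mem)
  show "R \<subseteq> ideal_pow R I 0"
    using ideal_gen.step[OF _ _ ideal_gen.zero, of _ R 1 "{1}"] by (auto simp: ideal_pow.simps)
qed

lemma ideal_pow_Suc_mult: "x \<in> ideal_pow R I n \<Longrightarrow> y \<in> I \<Longrightarrow> x * y \<in> ideal_pow R I (Suc n)"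
  unfolding ideal_pow.simps ideal_mult_def by (rule ideal_gen_base) blast

lemma ideal_pow_is_ideal: "is_ideal R I \<Longrightarrow> is_ideal R (ideal_pow R I n)"
proof (induction n)
  case 0
  then show ?case using ideal_gen_is_ideal[of "{1}"] one_mem by (simp add: ideal_pow.simps)
next
  case (Suc n)
  have "{a * b |a b. a \<in> ideal_pow R I n \<and> b \<in> I} \<subseteq> R"
    using Suc is_ideal_subset mult_mem by blast
  then show ?case by (simp add: ideal_pow.simps(2) ideal_mult_def ideal_gen_is_ideal)
qed

lemma ideal_pow_Suc_subset: "is_ideal R I \<Longrightarrow> ideal_pow R I (Suc n) \<subseteq> ideal_pow R I n"
  unfolding ideal_pow.simps(2) ideal_mult_def
  by (rule ideal_gen_minimal) (auto intro: ideal_pow_is_ideal is_ideal_mult_right is_ideal_subset)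

lemma ideal_pow_1: "is_ideal R I \<Longrightarrow> ideal_pow R I (Suc 0) = I"
proof
  assume I: "is_ideal R I"
  show "ideal_pow R I (Suc 0) \<subseteq> I"
    unfolding ideal_pow.simps(2) ideal_mult_def ideal_pow_0
    by (rule ideal_gen_minimal) (use I in \<open>auto intro: is_ideal_mult\<close>)
  show "I \<subseteq> ideal_pow R I (Suc 0)"
    using ideal_pow_Suc_mult[of 1 I 0] one_mem by auto
qed

lemma ideal_pow_mult:
  assumes I: "is_ideal R I"
  shows "x \<in> ideal_pow R I a \<Longrightarrow> y \<in> ideal_pow R I b \<Longrightarrow> x * y \<in> ideal_pow R I (a + b)"
proof (induction b arbitrary: y)
  case 0
  then show ?case using is_ideal_mult_right[OF ideal_pow_is_ideal[OF I]] ideal_pow_0 by auto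
next
  case (Suc b)
  let ?P = "ideal_pow R I"
  have P: "is_ideal R (?P k)" for k
    using ideal_pow_is_ideal[OF I] .
  have "is_ideal R {z \<in> R. x * z \<in> ?P (a + Suc b)}"
    unfolding is_ideal_def
  proof (intro conjI ballI)
    show "0 \<in> {z \<in> R. x * z \<in> ?P (a + Suc b)}"
      using zero_mem is_ideal_0[OF P] by simp
    show "z + w \<in> {z \<in> R. x * z \<in> ?P (a + Suc b)}"
      if "z \<in> {z \<in> R. x * z \<in> ?P (a + Suc b)}" "w \<in> {z \<in> R. x * z \<in> ?P (a + Suc b)}" for z w
      using that add_mem is_ideal_add[OF P, of "x * z" _ "x * w"] by (simp add: distrib_left)
    show "r * z \<in> {z \<in> R. x * z \<in> ?P (a + Suc b)}"
      if "r \<in> R" "z \<in> {z \<in> R. x * z \<in> ?P (a + Suc b)}" for r z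
      using that mult_mem is_ideal_mult[OF P, of r "x * z"] by (simp add: mult.left_commute)
  qed auto
  moreover have "x * (c * d) \<in> ?P (a + Suc b)" if "c \<in> ?P b" "d \<in> I" for c d
    using ideal_pow_Suc_mult[OF Suc.IH[OF Suc.prems(1) that(1)] that(2)] by (simp add: mult.assoc)
  then have "{c * d |c d. c \<in> ?P b \<and> d \<in> I} \<subseteq> {z \<in> R. x * z \<in> ?P (a + Suc b)}"
    using mult_mem is_ideal_subset[OF P] is_ideal_subset[OF I] by blast
  ultimately show ?case
    using ideal_gen_minimal Suc.prems(2) unfolding ideal_pow.simps(2) ideal_mult_def by blast
qed

lemma derivation_ideal_pow_Suc:
  assumes "derivation D" and D_mem: "\<And>f. f \<in> R \<Longrightarrow> D f \<in> R" and I: "is_ideal R I"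
  shows "f \<in> ideal_pow R I (Suc n) \<Longrightarrow> D f \<in> ideal_pow R I n"
proof (induction n arbitrary: f)
  case 0
  then show ?case
    using ideal_pow_Suc_subset[OF I, of 0] D_mem by (auto simp: ideal_pow_0)
next
  case (Suc n)
  interpret derivation D by fact
  let ?P = "ideal_pow R I"
  let ?K = "{f \<in> ?P (Suc n). D f \<in> ?P (Suc n)}"
  have P: "is_ideal R (?P k)" for k
    using ideal_pow_is_ideal[OF I] .
  have "is_ideal R ?K"
    unfolding is_ideal_def
  proof (intro conjI ballI)
    show "r * f \<in> ?K" if "r \<in> R" "f \<in> ?K" for r f
      using that is_ideal_mult[OF P] is_ideal_add[OF P] is_ideal_mult_right[OF P] D_mem
      by (simp add: leibniz)
  qed (auto simp: zero add intro: is_ideal_0[OF P] is_ideal_add[OF P] is_ideal_subset[OF P])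
  moreover have "c * d \<in> ?K" if c: "c \<in> ?P (Suc n)" and d: "d \<in> I" for c d
  proof -
    have "D c * d \<in> ?P (Suc n)"
      using ideal_pow_Suc_mult[OF Suc.IH[OF c] d] .
    moreover have "c * D d \<in> ?P (Suc n)"
      using is_ideal_mult_right[OF P D_mem[OF is_ideal_subset[OF I d]] c] .
    moreover have "c * d \<in> ?P (Suc n)"
      using ideal_pow_Suc_mult[OF c d] ideal_pow_Suc_subset[OF I] by blast
    ultimately show ?thesis
      by (simp add: leibniz is_ideal_add[OF P])
  qed
  ultimately have "ideal_pow R I (Suc (Suc n)) \<subseteq> ?K"
    unfolding ideal_pow.simps(2)[of R I "Suc n"] ideal_mult_def
    by (intro ideal_gen_minimal) blast+
  then show ?case using Suc.prems by blast
qed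

lemma euler_remainder_is_ideal:
  assumes "derivation D" and I: "is_ideal R I" and D_mem: "\<And>f. f \<in> R \<Longrightarrow> D f \<in> I"
  shows "is_ideal R {f \<in> ideal_pow R I k. D f - of_nat k * f \<in> ideal_pow R I (Suc k)}"
    (is "is_ideal R ?E")
proof -
  interpret derivation D by fact
  let ?P = "ideal_pow R I"
  have P: "is_ideal R (?P k)" for k
    using ideal_pow_is_ideal[OF I] .
  show ?thesis
    unfolding is_ideal_def
  proof (intro conjI ballI)
    show "r * f \<in> ?E" if "r \<in> R" "f \<in> ?E" for r f
    proof -
      have "D (r * f) - of_nat k * (r * f) = D r * f + r * (D f - of_nat k * f)"
        by (simp add: leibniz algebra_simps)
      moreover have "D r * f \<in> ?P (Suc k)"
        using ideal_pow_mult[OF I, of "D r" "Suc 0" f k] D_mem[OF that(1)] that(2) ideal_pow_1[OF I]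
        by simp
      moreover have "r * (D f - of_nat k * f) \<in> ?P (Suc k)"
        using that is_ideal_mult[OF P] by simp
      ultimately show ?thesis
        using that is_ideal_mult[OF P] is_ideal_add[OF P] by simp
    qed
    show "f + g \<in> ?E" if "f \<in> ?E" "g \<in> ?E" for f g
    proof -
      have "D (f + g) - of_nat k * (f + g) = (D f - of_nat k * f) + (D g - of_nat k * g)"
        by (simp add: add algebra_simps)
      then show ?thesis
        using that is_ideal_add[OF P] by simp
    qed
  qed (auto simp: zero intro: is_ideal_0[OF P] is_ideal_subset[OF P])
qed

lemma euler_derivation_ideal_pow:
  assumes "derivation D" and G: "G \<subseteq> R"
    and D_mem: "\<And>f. f \<in> R \<Longrightarrow> D f \<in> ideal_gen R G"
    and D_gen: "\<And>g. g \<in> G \<Longrightarrow> D g = g"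
  shows "f \<in> ideal_pow R (ideal_gen R G) m \<Longrightarrow> D f - of_nat m * f \<in> ideal_pow R (ideal_gen R G) (Suc m)"
proof -
  interpret derivation D by fact
  define I where "I = ideal_gen R G"
  let ?P = "ideal_pow R I"
  define E where "E k = {f \<in> ?P k. D f - of_nat k * f \<in> ?P (Suc k)}" for k
  have I: "is_ideal R I"
    unfolding I_def using ideal_gen_is_ideal[OF G] .
  have E: "is_ideal R (E k)" for k
    unfolding E_def using euler_remainder_is_ideal[OF \<open>derivation D\<close> I] D_mem by (simp add: I_def)
  have "G \<subseteq> E (Suc 0)"
    using D_gen ideal_gen_base is_ideal_0[OF ideal_pow_is_ideal[OF I]] ideal_pow_1[OF I]
    by (auto simp: E_def I_def)
  then have "I \<subseteq> E (Suc 0)"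
    unfolding I_def by (rule ideal_gen_minimal[OF E])
  then have D_gen_ideal: "D d - d \<in> ?P (Suc (Suc 0))" if "d \<in> I" for d
    using that by (auto simp: E_def)
  show "f \<in> ?P m \<Longrightarrow> D f - of_nat m * f \<in> ?P (Suc m)" for f
  proof (induction m arbitrary: f)
    case 0
    then show ?case using D_mem ideal_pow_1[OF I] by (simp add: I_def)
  next
    case (Suc m)
    have "c * d \<in> E (Suc m)" if c: "c \<in> ?P m" and d: "d \<in> I" for c d
    proof -
      have "D (c * d) - of_nat (Suc m) * (c * d) = (D c - of_nat m * c) * d + c * (D d - d)"
        by (simp add: leibniz algebra_simps)
      moreover have "(D c - of_nat m * c) * d \<in> ?P (Suc (Suc m))"
        using ideal_pow_Suc_mult[OF Suc.IH[OF c] d] .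
      moreover have "c * (D d - d) \<in> ?P (Suc (Suc m))"
        using ideal_pow_mult[OF I c D_gen_ideal[OF d]] by simp
      ultimately show ?thesis
        using ideal_pow_Suc_mult[OF c d] is_ideal_add[OF ideal_pow_is_ideal[OF I]] by (simp add: E_def)
    qed
    then have "?P (Suc m) \<subseteq> E (Suc m)"
      unfolding ideal_pow.simps(2)[of R I m] ideal_mult_def
      by (intro ideal_gen_minimal[OF E]) blast
    then show ?case using Suc.prems by (auto simp: E_def)
  qed
qed

lemma euler_dual_derivations:
  assumes "derivation Lx" "derivation Ly" and uv: "u \<in> R" "v \<in> R"
    and L_mem: "\<And>f. f \<in> R \<Longrightarrow> Lx f \<in> R" "\<And>f. f \<in> R \<Longrightarrow> Ly f \<in> R"
    and dual: "Lx u = 1" "Lx v = 0" "Ly u = 0" "Ly v = 1"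
  shows "f \<in> ideal_pow R (ideal_gen R {u, v}) m \<Longrightarrow>
    u * Lx f + v * Ly f - of_nat m * f \<in> ideal_pow R (ideal_gen R {u, v}) (Suc m)"
proof (rule euler_derivation_ideal_pow)
  interpret Lx: derivation Lx by fact
  interpret Ly: derivation Ly by fact
  show "derivation (\<lambda>f. u * Lx f + v * Ly f)"
    by unfold_locales (simp_all add: Lx.add Ly.add Lx.leibniz Ly.leibniz algebra_simps)
  show "{u, v} \<subseteq> R"
    using uv by simp
  show "u * Lx f + v * Ly f \<in> ideal_gen R {u, v}" if "f \<in> R" for f
    using ideal_gen_add ideal_gen_mult[OF L_mem(1)[OF that]] ideal_gen_mult[OF L_mem(2)[OF that]]
      ideal_gen_base[of _ "{u, v}"]
    by (simp add: mult.commute)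
  show "u * Lx g + v * Ly g = g" if "g \<in> {u, v}" for g
    using that dual by auto
qed

end

interpretation polys_in: subring "polys_in n" for n
  by unfold_locales
    (simp_all add: polys_in_add polys_in_mult polys_in_uminus)

section \<open>Fat points\<close>

lemma pt_ideal_is_ideal: "is_ideal S4 (pt_ideal P)"
  by (auto simp: pt_ideal_def split: prod.split
      intro!: polys_in.ideal_gen_is_ideal polys_in_diff polys_in_mult polys_in_Cst polys_in_Var)

lemma fat_ideal_is_ideal: "is_ideal S4 (fat_ideal X m)"
  unfolding fat_ideal_def by (intro polys_in.is_ideal_Inter polys_in.ideal_pow_is_ideal pt_ideal_is_ideal)

lemma pderiv_var_fat_ideal_Suc:
  assumes "F \<in> fat_ideal X (\<lambda>P. m P + 1)"
  shows "pderiv_var k F \<in> fat_ideal X m"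
proof -
  have F: "F \<in> ideal_pow S4 (pt_ideal P) (Suc (m P))" if "P \<in> X" for P
    using assms that by (simp add: fat_ideal_def)
  have "pderiv_var k F \<in> ideal_pow S4 (pt_ideal P) (m P)" if "P \<in> X" for P
    by (rule polys_in.derivation_ideal_pow_Suc[OF pderiv_var.derivation_axioms pderiv_var_polys_in
          pt_ideal_is_ideal F[OF that]])
  moreover have "pderiv_var k F \<in> S4"
    using assms by (simp add: fat_ideal_def pderiv_var_polys_in)
  ultimately show ?thesis
    by (simp add: fat_ideal_def)
qed

lemma exists_det_eq_1:
  fixes a0 a1 :: "'k::field"
  assumes "(a0, a1) \<noteq> (0, 0)"
  obtains c0 c1 where "c0 * a1 - c1 * a0 = 1"
proof (cases "a1 = 0")
  case True
  with assms show ?thesis by (intro that[of 0 "- 1 / a0"]) simp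
next
  case False
  then show ?thesis by (intro that[of "1 / a1" 0]) simp
qed

lemma exists_euler_operator_pt_ideal:
  fixes P :: "'k::field pt"
  assumes "valid_pt P"
  obtains D :: "'k mpoly \<Rightarrow> 'k mpoly" where
    "\<And>f m. f \<in> ideal_pow S4 (pt_ideal P) m \<Longrightarrow>
       D f - of_nat m * f \<in> ideal_pow S4 (pt_ideal P) (Suc m)"
    "\<And>f m. (\<And>k. k < 4 \<Longrightarrow> pderiv_var k f \<in> ideal_pow S4 (pt_ideal P) m) \<Longrightarrow>
       D f \<in> ideal_pow S4 (pt_ideal P) (Suc m)"
proof -
  obtain a0 a1 b0 b1 where P: "P = ((a0, a1), (b0, b1))"
    by (metis prod.collapse)
  from assms have "(a0, a1) \<noteq> (0, 0)" and "(b0, b1) \<noteq> (0, 0)"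
    by (simp_all add: P valid_pt_def)
  then obtain c0 c1 e0 e1 where c: "c0 * a1 - c1 * a0 = 1" and e: "e0 * b1 - e1 * b0 = 1"
    using exists_det_eq_1 by metis
  define u :: "'k mpoly" where "u = Cst a1 * Var 0 - Cst a0 * Var 1"
  define v :: "'k mpoly" where "v = Cst b1 * Var 2 - Cst b0 * Var 3"
  define Lx where "Lx f = Cst c0 * pderiv_var 0 f + Cst c1 * pderiv_var 1 f" for f :: "'k mpoly"
  define Ly where "Ly f = Cst e0 * pderiv_var 2 f + Cst e1 * pderiv_var 3 f" for f :: "'k mpoly"
  define I where "I = pt_ideal P"
  have I: "is_ideal S4 I"
    by (simp add: I_def pt_ideal_is_ideal)
  have I_gen: "I = ideal_gen S4 {u, v}"
    by (simp add: I_def P pt_ideal_def u_def v_def)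
  have combination: "derivation (\<lambda>f. Cst a * pderiv_var i f + Cst b * pderiv_var j f)" for a b i j
    by unfold_locales (simp_all add: pderiv_var.add pderiv_var.leibniz algebra_simps)
  have Lx: "derivation Lx" and Ly: "derivation Ly"
    unfolding Lx_def Ly_def by (rule combination)+
  have uv: "u \<in> S4" "v \<in> S4"
    by (simp_all add: u_def v_def polys_in_diff polys_in_mult polys_in_Cst polys_in_Var)
  have L_mem: "Lx f \<in> S4" "Ly f \<in> S4" if "f \<in> S4" for f
    using that unfolding Lx_def Ly_def by (auto intro!: polys_in_add polys_in_mult polys_in_Cst pderiv_var_polys_in)
  have "Lx u = 1" "Lx v = 0" "Ly u = 0" "Ly v = 1"
    using c e by (simp_all add: Lx_def Ly_def u_def v_def pderiv_var.diff pderiv_var.leibniz pderiv_var_Var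
        flip: Cst_diff Cst_mult)
  from polys_in.euler_dual_derivations[OF Lx Ly uv L_mem this]
  have euler: "f \<in> ideal_pow S4 I m \<Longrightarrow> u * Lx f + v * Ly f - of_nat m * f \<in> ideal_pow S4 I (Suc m)"
    for f m
    unfolding I_gen .
  have grad: "u * Lx f + v * Ly f \<in> ideal_pow S4 I (Suc m)"
    if "\<And>k. k < 4 \<Longrightarrow> pderiv_var k f \<in> ideal_pow S4 I m" for f m
  proof -
    have "Lx f \<in> ideal_pow S4 I m" "Ly f \<in> ideal_pow S4 I m"
      unfolding Lx_def Ly_def using that[of 0] that[of 1] that[of 2] that[of 3]
      by (auto intro!: is_ideal_add is_ideal_mult polys_in.ideal_pow_is_ideal[OF I] polys_in_Cst)
    moreover have "u \<in> I" "v \<in> I"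
      unfolding I_gen by (simp_all add: polys_in.ideal_gen_base)
    ultimately have "u * Lx f \<in> ideal_pow S4 I (Suc m)" "v * Ly f \<in> ideal_pow S4 I (Suc m)"
      using polys_in.ideal_pow_mult[OF I, of _ "Suc 0" _ m] polys_in.ideal_pow_1[OF I] by simp_all
    then show ?thesis
      by (rule is_ideal_add[OF polys_in.ideal_pow_is_ideal[OF I]])
  qed
  show ?thesis
    by (rule that[OF euler[unfolded I_def] grad[unfolded I_def]])
qed

lemma pt_ideal_pow_Suc_if_pderiv_var:
  fixes P :: "'k::field_char_0 pt"
  assumes "valid_pt P" and "0 < m"
    and F: "F \<in> ideal_pow S4 (pt_ideal P) m"
    and dF: "\<And>k. k < 4 \<Longrightarrow> pderiv_var k F \<in> ideal_pow S4 (pt_ideal P) m"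
  shows "F \<in> ideal_pow S4 (pt_ideal P) (Suc m)"
proof -
  let ?J = "ideal_pow S4 (pt_ideal P) (Suc m)"
  have J: "is_ideal S4 ?J"
    by (rule polys_in.ideal_pow_is_ideal[OF pt_ideal_is_ideal])
  obtain D where "D F - of_nat m * F \<in> ?J" and "D F \<in> ?J"
    using exists_euler_operator_pt_ideal[OF \<open>valid_pt P\<close>] F dF by metis
  then have "of_nat m * F \<in> ?J"
    using polys_in.is_ideal_diff[OF J, of "D F" "D F - of_nat m * F"] by simp
  then have "Cst (1 / of_nat m) * (of_nat m * F) \<in> ?J"
    by (rule is_ideal_mult[OF J polys_in_Cst])
  moreover have "Cst (1 / of_nat m) * (of_nat m * F) = F"
    using \<open>0 < m\<close> by (simp flip: mult.assoc Cst_of_nat Cst_mult)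
  ultimately show ?thesis
    by simp
qed

lemma fat_ideal_Suc_if_pderiv_var:
  fixes X :: "'k::field_char_0 pt set"
  assumes "\<forall>P\<in>X. valid_pt P" and "\<forall>P\<in>X. 0 < m P"
    and F: "F \<in> fat_ideal X m" and dF: "\<forall>k<4. pderiv_var k F \<in> fat_ideal X m"
  shows "F \<in> fat_ideal X (\<lambda>P. m P + 1)"
proof -
  have "F \<in> ideal_pow S4 (pt_ideal P) (Suc (m P))" if "P \<in> X" for P
    using assms that by (intro pt_ideal_pow_Suc_if_pderiv_var) (auto simp: fat_ideal_def)
  then show ?thesis
    using F by (simp add: fat_ideal_def)
qed

section \<open>Kaehler differentials\<close>

lemma omega_map_add: "omega_map g + omega_map h = omega_map (\<lambda>i. g i + h i)"
  by (simp add: omega_map_def distrib_right sum.distrib)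

lemma omega_map_scale: "c * omega_map g = omega_map (\<lambda>i. c * g i)"
  by (simp add: omega_map_def sum_distrib_left algebra_simps)

lemma omega_map_0: "omega_map (\<lambda>i. 0) = 0"
  by (simp add: omega_map_def)

lemma omega_map_indicator: "k < 4 \<Longrightarrow> omega_map (\<lambda>i. if i = k then 1 else 0) = Var (k + 4) - Var k"
  unfolding omega_map_def
  by (subst sum.cong[OF refl, where h = "\<lambda>i. if i = k then Var (k + 4) - Var k else 0"]) auto

lemma omega_map_mem_S8: "(\<And>i. i < 4 \<Longrightarrow> g i \<in> S8) \<Longrightarrow> omega_map g \<in> S8"
  unfolding omega_map_def
  by (rule polys_in_sum) (auto intro!: polys_in_mult polys_in_diff polys_in_Var)

lemma collapse_omega_map: "collapse (omega_map g) = 0"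
  by (simp add: omega_map_def collapse.sum collapse_mult collapse.diff collapse_Var)

lemma pderiv_var_omega_map:
  assumes "\<And>i. i < 4 \<Longrightarrow> g i \<in> S4" and "k < 4"
  shows "pderiv_var (k + 4) (omega_map g) = g k"
proof -
  have "pderiv_var (k + 4) (g i * (Var (i + 4) - Var i)) = (if i = k then g k else 0)" if "i < 4" for i
    using that pderiv_var_eq_0_if_polys_in[OF assms(1)[OF that], of "k + 4"]
    by (simp add: pderiv_var.leibniz pderiv_var.diff pderiv_var_Var)
  then show ?thesis
    using \<open>k < 4\<close> by (simp add: omega_map_def pderiv_var.sum)
qed

text \<open>
  Restricting the primed gradient to the diagonal maps Jt I to S^4 modulo I and the gradients of
  elements of I; this is the kernel of that map, an ideal containing Nt I.
\<close>

definition primed_grad_exact :: "'k::comm_ring_1 mpoly set \<Rightarrow> 'k mpoly set" where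
  "primed_grad_exact I = {h \<in> S8. collapse h \<in> I \<and>
     (\<exists>G\<in>I. \<forall>i<4. collapse (pderiv_var (i + 4) h) - pderiv_var i G \<in> I)}"

context
  fixes I :: "'k::comm_ring_1 mpoly set"
  assumes I: "is_ideal S4 I"
begin

lemma Nt_is_ideal: "is_ideal S8 (Nt I)"
proof -
  have "ideal_mult S8 (Jt I) (Jt I) \<subseteq> S8"
    unfolding ideal_mult_def Jt_def by (rule polys_in.ideal_gen_subset) (auto intro: polys_in_mult)
  moreover have "TQ I \<subseteq> S8"
    unfolding TQ_def using is_ideal_subset[OF I] S4_subset_S8 prime_copy_mem_S8
    by (intro polys_in.ideal_gen_subset) auto
  ultimately show ?thesis
    unfolding Nt_def by (intro polys_in.ideal_gen_is_ideal) auto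
qed

lemma mem_Nt_if_mem_I: "f \<in> I \<Longrightarrow> f \<in> Nt I"
  and prime_copy_mem_Nt: "f \<in> I \<Longrightarrow> prime_copy f \<in> Nt I"
  unfolding Nt_def TQ_def
  by (auto intro!: polys_in.ideal_gen_base)

lemma mult_mem_Nt: "a \<in> Jt I \<Longrightarrow> b \<in> Jt I \<Longrightarrow> a * b \<in> Nt I"
  unfolding Nt_def ideal_mult_def by (auto intro!: polys_in.ideal_gen_base)

lemma omega_map_mem_Jt: "(\<And>i. i < 4 \<Longrightarrow> g i \<in> S8) \<Longrightarrow> omega_map g \<in> Jt I"
  using is_ideal_0[OF I] by (simp add: Jt_def omega_map_mem_S8 collapse_omega_map)

lemma prime_copy_taylor_mem_Nt:
  "f \<in> S4 \<Longrightarrow> prime_copy f - f - omega_map (\<lambda>i. pderiv_var i f) \<in> Nt I"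
proof (induction f rule: polys_in_induct)
  case (Cst c)
  then show ?case using is_ideal_0[OF Nt_is_ideal] by (simp add: omega_map_0)
next
  case (Var j)
  then have "omega_map (\<lambda>i. pderiv_var i (Var j)) = (Var (j + 4) - Var j :: 'k mpoly)"
    using omega_map_indicator[of j] by (simp add: pderiv_var_Var eq_commute[of j])
  then show ?case using is_ideal_0[OF Nt_is_ideal] by (simp add: prime_copy_Var)
next
  case (add f g)
  have eq: "prime_copy (f + g) - (f + g) - omega_map (\<lambda>i. pderiv_var i (f + g)) =
      (prime_copy f - f - omega_map (\<lambda>i. pderiv_var i f)) +
      (prime_copy g - g - omega_map (\<lambda>i. pderiv_var i g))"
    by (simp add: prime_copy.add pderiv_var.add flip: omega_map_add)
  show ?case
    unfolding eq by (rule is_ideal_add[OF Nt_is_ideal add.IH])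
next
  case (mult f g)
  define a where "a = omega_map (\<lambda>i. pderiv_var i f)"
  define b where "b = omega_map (\<lambda>i. pderiv_var i g)"
  have grad_S8: "pderiv_var i h \<in> S8" if "h \<in> S4" for h :: "'k mpoly" and i
    using pderiv_var_polys_in[OF that] S4_subset_S8 by blast
  have a: "a \<in> Jt I" and b: "b \<in> Jt I"
    unfolding a_def b_def using grad_S8 mult.hyps by (auto intro!: omega_map_mem_Jt)
  have "omega_map (\<lambda>i. pderiv_var i (f * g)) = g * a + f * b"
    by (simp add: a_def b_def pderiv_var.leibniz omega_map_scale omega_map_add algebra_simps)
  \<comment> \<open>Leibniz's rule turns the Taylor remainder of a product into a combination of the
    remainders of the factors plus the product a b of two elements of Jt I.\<close>
  then have "prime_copy (f * g) - f * g - omega_map (\<lambda>i. pderiv_var i (f * g)) =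
      a * b + (prime_copy f - f - a) * prime_copy g + (f + a) * (prime_copy g - g - b)"
    by (simp add: prime_copy_mult algebra_simps)
  moreover have "(prime_copy f - f - a) * prime_copy g \<in> Nt I"
    using is_ideal_mult_right[OF Nt_is_ideal prime_copy_mem_S8[OF mult.hyps(2)]] mult.IH(1)
    by (simp add: a_def)
  moreover have "(f + a) * (prime_copy g - g - b) \<in> Nt I"
    using is_ideal_mult[OF Nt_is_ideal] mult.IH(2) mult.hyps(1) a S4_subset_S8
    by (auto simp: b_def Jt_def intro: polys_in_add)
  ultimately show ?case
    using mult_mem_Nt[OF a b] is_ideal_add[OF Nt_is_ideal] by simp
qed

lemma taylor_remainder_mult:
  assumes f: "f \<in> S8" and g: "g \<in> S8"
    and gf: "\<forall>i<4. gf i \<in> S4" "f - collapse f - omega_map gf \<in> Nt I"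
    and gg: "\<forall>i<4. gg i \<in> S4" "g - collapse g - omega_map gg \<in> Nt I"
  shows "f * g - collapse (f * g) - omega_map (\<lambda>i. collapse f * gg i + collapse g * gf i) \<in> Nt I"
proof -
  define a where "a = omega_map gf"
  define b where "b = omega_map gg"
  have a: "a \<in> Jt I" and b: "b \<in> Jt I"
    unfolding a_def b_def using gf gg S4_subset_S8 by (auto intro!: omega_map_mem_Jt)
  have "omega_map (\<lambda>i. collapse f * gg i + collapse g * gf i) = collapse f * b + collapse g * a"
    by (simp only: a_def b_def omega_map_scale omega_map_add)
  then have eq: "f * g - collapse (f * g) - omega_map (\<lambda>i. collapse f * gg i + collapse g * gf i) =
      a * b + (f - collapse f - a) * g + (collapse f + a) * (g - collapse g - b)"
    by (simp add: collapse_mult algebra_simps)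
  have "(f - collapse f - a) * g \<in> Nt I"
    using is_ideal_mult_right[OF Nt_is_ideal g] gf by (simp add: a_def)
  moreover have "collapse f + a \<in> S8"
    using collapse_mem_S4[OF f] a S4_subset_S8 by (auto simp: Jt_def intro: polys_in_add)
  then have "(collapse f + a) * (g - collapse g - b) \<in> Nt I"
    using is_ideal_mult[OF Nt_is_ideal] gg by (simp add: b_def)
  ultimately show ?thesis
    unfolding eq using mult_mem_Nt[OF a b] is_ideal_add[OF Nt_is_ideal] by simp
qed

lemma taylor_mem_Nt:
  "h \<in> S8 \<Longrightarrow> \<exists>g. (\<forall>i<4. g i \<in> S4) \<and> h - collapse h - omega_map g \<in> Nt I"
proof (induction h rule: polys_in_induct)
  case (Cst c)
  then show ?case
    using is_ideal_0[OF Nt_is_ideal] by (intro exI[of _ "\<lambda>i. 0"]) (simp add: omega_map_0)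
next
  case (Var j)
  show ?case
  proof (cases "j < 4")
    case True
    then show ?thesis
      using is_ideal_0[OF Nt_is_ideal]
      by (intro exI[of _ "\<lambda>i. 0"]) (simp add: omega_map_0  collapse_Var)
  next
    case False
    define k where "k = j - 4"
    with Var False have k: "k < 4" "j = k + 4"
      by simp_all
    then have "Var j - collapse (Var j) - omega_map (\<lambda>i. if i = k then 1 else 0) = (0 :: 'k mpoly)"
      by (simp add: omega_map_indicator collapse_Var)
    then show ?thesis
      using is_ideal_0[OF Nt_is_ideal]
      by (intro exI[of _ "\<lambda>i. if i = k then 1 else 0"]) simp
  qed
next
  case (add f g)
  then obtain gf gg where gf: "\<forall>i<4. gf i \<in> S4" "f - collapse f - omega_map gf \<in> Nt I"
    and gg: "\<forall>i<4. gg i \<in> S4" "g - collapse g - omega_map gg \<in> Nt I"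
    by blast
  have eq: "f + g - collapse (f + g) - omega_map (\<lambda>i. gf i + gg i) =
      (f - collapse f - omega_map gf) + (g - collapse g - omega_map gg)"
    by (simp add: collapse.add flip: omega_map_add)
  show ?case
  proof (intro exI[of _ "\<lambda>i. gf i + gg i"] conjI)
    show "\<forall>i<4. gf i + gg i \<in> S4"
      using gf gg by (auto intro: polys_in_add)
    show "f + g - collapse (f + g) - omega_map (\<lambda>i. gf i + gg i) \<in> Nt I"
      unfolding eq by (rule is_ideal_add[OF Nt_is_ideal gf(2) gg(2)])
  qed
next
  case (mult f g)
  then obtain gf gg where gf: "\<forall>i<4. gf i \<in> S4" "f - collapse f - omega_map gf \<in> Nt I"
    and gg: "\<forall>i<4. gg i \<in> S4" "g - collapse g - omega_map gg \<in> Nt I"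
    by blast
  let ?g = "\<lambda>i. collapse f * gg i + collapse g * gf i"
  have "\<forall>i<4. ?g i \<in> S4"
    using gf gg collapse_mem_S4 mult.hyps by (auto intro!: polys_in_add polys_in_mult)
  moreover have "f * g - collapse (f * g) - omega_map ?g \<in> Nt I"
    using taylor_remainder_mult[OF mult.hyps gf gg] .
  ultimately show ?case
    by (intro exI[of _ ?g] conjI)
qed

lemma primed_grad_exact_mult:
  assumes r: "r \<in> S8" and "h \<in> primed_grad_exact I"
  shows "r * h \<in> primed_grad_exact I"
proof -
  from assms(2) obtain G where h: "h \<in> S8" "collapse h \<in> I" "G \<in> I"
      "\<forall>i<4. collapse (pderiv_var (i + 4) h) - pderiv_var i G \<in> I"
    unfolding primed_grad_exact_def by blast
  have cr: "collapse r \<in> S4"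
    using collapse_mem_S4[OF r] .
  have "collapse (pderiv_var (i + 4) (r * h)) - pderiv_var i (collapse r * G) =
      collapse (pderiv_var (i + 4) r) * collapse h
      + collapse r * (collapse (pderiv_var (i + 4) h) - pderiv_var i G)
      - pderiv_var i (collapse r) * G" for i
    by (simp add: pderiv_var.leibniz collapse.add collapse_mult algebra_simps)
  moreover have "collapse (pderiv_var (i + 4) r) * collapse h \<in> I"
      "collapse r * (collapse (pderiv_var (i + 4) h) - pderiv_var i G) \<in> I"
      "pderiv_var i (collapse r) * G \<in> I" if "i < 4" for i
    using that h is_ideal_mult[OF I] cr collapse_mem_S4[OF pderiv_var_polys_in[OF r]]
      pderiv_var_polys_in[OF cr] by simp_all
  ultimately have "\<forall>i<4. collapse (pderiv_var (i + 4) (r * h)) - pderiv_var i (collapse r * G) \<in> I"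
    using is_ideal_add[OF I] polys_in.is_ideal_diff[OF I] by simp
  moreover have "collapse r * G \<in> I" and "collapse (r * h) \<in> I"
    using is_ideal_mult[OF I cr] h by (simp_all add: collapse_mult)
  ultimately show ?thesis
    using polys_in_mult[OF r h(1)] unfolding primed_grad_exact_def by blast
qed

lemma primed_grad_exact_is_ideal: "is_ideal S8 (primed_grad_exact I)"
  unfolding is_ideal_def
proof (intro conjI ballI)
  show "0 \<in> primed_grad_exact I"
    using is_ideal_0[OF I] by (force simp: primed_grad_exact_def pderiv_var.zero)
  show "x + y \<in> primed_grad_exact I" if "x \<in> primed_grad_exact I" "y \<in> primed_grad_exact I" for x y
  proof -
    from that obtain G H where x: "x \<in> S8" "collapse x \<in> I" "G \<in> I"
        "\<forall>i<4. collapse (pderiv_var (i + 4) x) - pderiv_var i G \<in> I"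
      and y: "y \<in> S8" "collapse y \<in> I" "H \<in> I"
        "\<forall>i<4. collapse (pderiv_var (i + 4) y) - pderiv_var i H \<in> I"
      unfolding primed_grad_exact_def by blast
    have "collapse (pderiv_var (i + 4) (x + y)) - pderiv_var i (G + H) =
        (collapse (pderiv_var (i + 4) x) - pderiv_var i G) + (collapse (pderiv_var (i + 4) y) - pderiv_var i H)"
      for i by (simp add: pderiv_var.add collapse.add)
    then have "\<forall>i<4. collapse (pderiv_var (i + 4) (x + y)) - pderiv_var i (G + H) \<in> I"
      using x(4) y(4) is_ideal_add[OF I] by simp
    then show ?thesis
      using x y is_ideal_add[OF I] polys_in_add[of x 8 y]
      unfolding primed_grad_exact_def by (auto simp: collapse.add)
  qed
  show "r * h \<in> primed_grad_exact I" if "r \<in> S8" and "h \<in> primed_grad_exact I" for r h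
    using primed_grad_exact_mult that .
qed (auto simp: primed_grad_exact_def)

lemma mult_Jt_mem_primed_grad_exact:
  assumes a: "a \<in> Jt I" and b: "b \<in> Jt I"
  shows "a * b \<in> primed_grad_exact I"
proof -
  have "collapse (pderiv_var (i + 4) (a * b)) \<in> I" for i
  proof -
    have "collapse (pderiv_var (i + 4) (a * b)) =
        collapse (pderiv_var (i + 4) a) * collapse b + collapse (pderiv_var (i + 4) b) * collapse a"
      by (simp add: pderiv_var.leibniz collapse.add collapse_mult mult.commute)
    moreover have "collapse (pderiv_var (i + 4) a) * collapse b \<in> I"
      "collapse (pderiv_var (i + 4) b) * collapse a \<in> I"
      using a b is_ideal_mult[OF I] collapse_mem_S4[OF pderiv_var_polys_in[of a 8]]
        collapse_mem_S4[OF pderiv_var_polys_in[of b 8]]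
      by (simp_all add: Jt_def)
    ultimately show ?thesis
      using is_ideal_add[OF I] by simp
  qed
  moreover have "a * b \<in> S8" and "collapse (a * b) \<in> I"
    using a b is_ideal_mult[OF I collapse_mem_S4[of a 8]]
    by (simp_all add: Jt_def collapse_mult polys_in_mult)
  ultimately show ?thesis
    using is_ideal_0[OF I] unfolding primed_grad_exact_def by (auto simp: pderiv_var.zero intro!: bexI[of _ 0])
qed

lemma Nt_subset_primed_grad_exact: "Nt I \<subseteq> primed_grad_exact I"
proof -
  have base: "f \<in> primed_grad_exact I" if "f \<in> I" for f
  proof -
    have f: "f \<in> S4" using is_ideal_subset[OF I that] .
    then have "collapse (pderiv_var (i + 4) f) = 0" for i
      by (simp add: pderiv_var_eq_0_if_polys_in)
    then show ?thesis
      using f that is_ideal_0[OF I] S4_subset_S8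
      unfolding primed_grad_exact_def by (auto simp: collapse_S4 pderiv_var.zero intro!: bexI[of _ 0])
  qed
  have prime: "prime_copy f \<in> primed_grad_exact I" if "f \<in> I" for f
  proof -
    have f: "f \<in> S4" using is_ideal_subset[OF I that] .
    then have "\<forall>i<4. collapse (pderiv_var (i + 4) (prime_copy f)) - pderiv_var i f \<in> I"
      using is_ideal_0[OF I] by (simp add: collapse_pderiv_var_prime_copy)
    then show ?thesis
      using f that prime_copy_mem_S8 unfolding primed_grad_exact_def by (auto simp: collapse_prime_copy)
  qed
  have "ideal_mult S8 (Jt I) (Jt I) \<subseteq> primed_grad_exact I"
    unfolding ideal_mult_def using mult_Jt_mem_primed_grad_exact
    by (intro polys_in.ideal_gen_minimal[OF primed_grad_exact_is_ideal]) blast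
  moreover have "TQ I \<subseteq> primed_grad_exact I"
    unfolding TQ_def using base prime
    by (intro polys_in.ideal_gen_minimal[OF primed_grad_exact_is_ideal]) blast
  ultimately show ?thesis
    unfolding Nt_def by (intro polys_in.ideal_gen_minimal[OF primed_grad_exact_is_ideal]) blast
qed

lemma omega_map_mem_Nt_iff:
  assumes g: "\<forall>i<4. g i \<in> S4"
  shows "omega_map g \<in> Nt I \<longleftrightarrow> (\<exists>F\<in>I. \<forall>i<4. g i - pderiv_var i F \<in> I)"
proof
  assume "omega_map g \<in> Nt I"
  then obtain F where "F \<in> I" and F: "\<forall>i<4. collapse (pderiv_var (i + 4) (omega_map g)) - pderiv_var i F \<in> I"
    using Nt_subset_primed_grad_exact unfolding primed_grad_exact_def by blast
  moreover have "collapse (pderiv_var (i + 4) (omega_map g)) = g i" if "i < 4" for i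
    using g that by (simp add: pderiv_var_omega_map collapse_S4)
  ultimately show "\<exists>F\<in>I. \<forall>i<4. g i - pderiv_var i F \<in> I"
    by auto
next
  assume "\<exists>F\<in>I. \<forall>i<4. g i - pderiv_var i F \<in> I"
  then obtain F where F: "F \<in> I" and gF: "\<forall>i<4. g i - pderiv_var i F \<in> I"
    by blast
  have eq: "omega_map g = (prime_copy F - F) - (prime_copy F - F - omega_map (\<lambda>i. pderiv_var i F))
      + omega_map (\<lambda>i. g i - pderiv_var i F)"
    by (simp add: omega_map_add)
  have diff: "prime_copy F - F \<in> Nt I"
    using polys_in.is_ideal_diff[OF Nt_is_ideal prime_copy_mem_Nt[OF F] mem_Nt_if_mem_I[OF F]] .
  have taylor: "prime_copy F - F - omega_map (\<lambda>i. pderiv_var i F) \<in> Nt I"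
    using prime_copy_taylor_mem_Nt is_ideal_subset[OF I F] by blast
  have rest: "omega_map (\<lambda>i. g i - pderiv_var i F) \<in> Nt I"
    unfolding omega_map_def
  proof (rule is_ideal_sum[OF Nt_is_ideal])
    fix i assume "i \<in> {..<4::nat}"
    then show "(g i - pderiv_var i F) * (Var (i + 4) - Var i) \<in> Nt I"
      using gF mem_Nt_if_mem_I is_ideal_mult_right[OF Nt_is_ideal]
      by (simp add: polys_in_diff polys_in_Var)
  qed
  show "omega_map g \<in> Nt I"
    unfolding eq by (rule is_ideal_add[OF Nt_is_ideal polys_in.is_ideal_diff[OF Nt_is_ideal diff taylor] rest])
qed

lemma Jt_exists_omega_map_mod_Nt:
  assumes "w \<in> Jt I"
  shows "\<exists>g. (\<forall>i<4. g i \<in> S4) \<and> w - omega_map g \<in> Nt I"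
proof -
  from assms have "w \<in> S8" and "collapse w \<in> I"
    by (simp_all add: Jt_def)
  obtain g where g: "\<forall>i<4. g i \<in> S4" and "w - collapse w - omega_map g \<in> Nt I"
    using taylor_mem_Nt[OF \<open>w \<in> S8\<close>] by blast
  then have "(w - collapse w - omega_map g) + collapse w \<in> Nt I"
    using is_ideal_add[OF Nt_is_ideal] mem_Nt_if_mem_I[OF \<open>collapse w \<in> I\<close>] by blast
  then show ?thesis
    using g by auto
qed

end

theorem theorem3p5:
  fixes X :: "('k::field_char_0) pt set" and m :: "'k pt \<Rightarrow> nat"
  assumes finX: "finite X"
    and valid: "\<forall>P\<in>X. valid_pt P"
    and distinct: "\<forall>P\<in>X. \<forall>P'\<in>X. same_pt P P' \<longrightarrow> P = P'"
    and mpos: "\<forall>P\<in>X. 0 < m P"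
  defines "IY \<equiv> fat_ideal X m"
    and "IV \<equiv> fat_ideal X (\<lambda>P. m P + 1)"
  shows
    \<comment> \<open>the first map F + I_V \<mapsto> (dF mod I_Y) is well defined\<close>
    "(\<forall>F\<in>IV. \<forall>i<4. pderiv_var i F \<in> IY)
     \<comment> \<open>exactness at I_Y/I_V (injectivity)\<close>
   \<and> (\<forall>F\<in>IY. (\<forall>i<4. pderiv_var i F \<in> IY) \<longrightarrow> F \<in> IV)
     \<comment> \<open>exactness at R_Y^4: kernel of second map = image of first map\<close>
   \<and> (\<forall>g. (\<forall>i<4. g i \<in> S4) \<longrightarrow>
          (omega_map g \<in> Nt IY \<longleftrightarrow> (\<exists>F\<in>IY. \<forall>i<4. g i - pderiv_var i F \<in> IY)))
     \<comment> \<open>exactness at Omega (surjectivity)\<close>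
   \<and> (\<forall>w\<in>Jt IY. \<exists>g. (\<forall>i<4. g i \<in> S4) \<and> w - omega_map g \<in> Nt IY)"
proof (intro conjI allI impI ballI)
  have IY: "is_ideal S4 IY"
    unfolding IY_def by (rule fat_ideal_is_ideal)
  show "pderiv_var i F \<in> IY" if "F \<in> IV" for F i
    using that unfolding IV_def IY_def by (rule pderiv_var_fat_ideal_Suc)
  show "F \<in> IV" if "F \<in> IY" and "\<forall>i<4. pderiv_var i F \<in> IY" for F
    using fat_ideal_Suc_if_pderiv_var[OF valid mpos] that unfolding IV_def IY_def .
  show "omega_map g \<in> Nt IY \<longleftrightarrow> (\<exists>F\<in>IY. \<forall>i<4. g i - pderiv_var i F \<in> IY)"
    if "\<forall>i<4. g i \<in> S4" for g
    using omega_map_mem_Nt_iff[OF IY that] .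
  show "\<exists>g. (\<forall>i<4. g i \<in> S4) \<and> w - omega_map g \<in> Nt IY" if "w \<in> Jt IY" for w
    using Jt_exists_omega_map_mod_Nt[OF IY that] .
qed

end
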